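(* Let $\mathcal H^+=\operatorname{span}_{\mathbb C}\{t^l_{nm}(Z)\}$ and $\mathcal H^-=\operatorname{span}_{\mathbb C}\{t^l_{nm}(Z)\,N(Z)^{-(2l+1)}\}$ (over all $l\in\{0,\frac12,1,\dots\}$, $m,n\in\{-l,\dots,l\}$). Then, with $\mathrm{Zh}^\pm,\mathrm{Zh}^0$ as defined below: (1) the linear span of all products $\phi_1\phi_2$ with $\phi_1,\phi_2\in\mathcal H^+$ equals $\mathrm{Zh}^+$; (2) the linear span of all products $\phi_1\phi_2$ with $\phi_1,\phi_2\in\mathcal H^-$ equals $\mathrm{Zh}^-$; (3) the linear span of all products $\phi_1\phi_2$ with $\phi_1\in\mathcal H^-$, $\phi_2\in\mathcal H^+$ equals $\mathrm{Zh}^0$.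
   Context: $\mathbb H_{\mathbb C}$ is identified with complex $2\times2$ matrices $Z=(z_{ij})$, $N(Z)=\det Z$, and $t^l_{nm}(Z)=\frac1{2\pi i}\oint (sz_{11}+z_{21})^{l-m}(sz_{12}+z_{22})^{l+m}s^{-l+n}\,\frac{ds}{s}$ (loop once counterclockwise around $0$), for $l\in\{0,\frac12,1,\dots\}$, $m,n\in\mathbb Z+l$, $-l\le m,n\le l$. ($\mathcal H^+$ is the space of holomorphic harmonic polynomials on $\mathbb H_{\mathbb C}$, and $\mathcal H^-$ its counterpart regular at infinity.) In $\mathrm{Zh}=\mathbb C[z_{11},z_{12},z_{21},z_{22},N(Z)^{-1}]$: $\mathrm{Zh}^+=\operatorname{span}\{t^l_{nm}N^k: k\ge0\}$, $\mathrm{Zh}^-=\operatorname{span}\{t^l_{nm}N^k: k\le-(2l+2)\}$, $\mathrm{Zh}^0=\operatorname{span}\{t^l_{nm}N^k: -(2l+1)\le k\le-1\}$, $k\in\mathbb Z$. *)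

theory Defs
  imports "HOL-Analysis.Analysis" "HOL-Computational_Algebra.Polynomial"
begin

text \<open>Complex 2x2 matrices Z, with z_ij = Z$i$j.  Functions on them with values in complex.\<close>

type_synonym cmat = "complex^2^2"

definition N :: "cmat \<Rightarrow> complex" where
  "N Z = det Z"

definition cspan :: "('a \<Rightarrow> complex) set \<Rightarrow> ('a \<Rightarrow> complex) set" where
  "cspan S = {f. \<exists>T c. finite T \<and> T \<subseteq> S \<and> f = (\<lambda>x. \<Sum>g\<in>T. c g * g x)}"

definition prodspan :: "('a \<Rightarrow> complex) set \<Rightarrow> ('a \<Rightarrow> complex) set \<Rightarrow> ('a \<Rightarrow> complex) set" where
  "prodspan A B = cspan {(\<lambda>x. f x * g x) | f g. f \<in> A \<and> g \<in> B}"

text \<open>Matrix coefficient t^l_{nm}(Z), indexed by L = 2l, p = l - m, r = l - n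
  (so 0 <= p, r <= L).  The contour integral
  (1/2 pi i) \<oint> (s z11 + z21)^(l-m) (s z12 + z22)^(l+m) s^(-l+n) ds/s
  is exactly the coefficient of s^(l-n) in the polynomial
  (s z11 + z21)^(l-m) (s z12 + z22)^(l+m).\<close>
definition t :: "nat \<Rightarrow> nat \<Rightarrow> nat \<Rightarrow> cmat \<Rightarrow> complex" where
  "t L p r Z = coeff ([:Z$2$1, Z$1$1:] ^ p * [:Z$2$2, Z$1$2:] ^ (L - p)) r"

definition Hplus :: "(cmat \<Rightarrow> complex) set" where
  "Hplus = cspan {t L p r | L p r. p \<le> L \<and> r \<le> L}"

definition Hminus :: "(cmat \<Rightarrow> complex) set" where
  "Hminus = cspan {(\<lambda>Z. t L p r Z * N Z powi (- (int L + 1))) | L p r. p \<le> L \<and> r \<le> L}"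

definition Zh_plus :: "(cmat \<Rightarrow> complex) set" where
  "Zh_plus = cspan {(\<lambda>Z. t L p r Z * N Z powi k) | L p r k. p \<le> L \<and> r \<le> L \<and> 0 \<le> k}"

definition Zh_minus :: "(cmat \<Rightarrow> complex) set" where
  "Zh_minus = cspan {(\<lambda>Z. t L p r Z * N Z powi k) | L p r k.
      p \<le> L \<and> r \<le> L \<and> k \<le> - (int L + 2)}"

definition Zh_zero :: "(cmat \<Rightarrow> complex) set" where
  "Zh_zero = cspan {(\<lambda>Z. t L p r Z * N Z powi k) | L p r k.
      p \<le> L \<and> r \<le> L \<and> - (int L + 1) \<le> k \<and> k \<le> -1}"

end

theory Submission
  imports Defs "HOL-Library.Function_Algebras"
begin

text \<open>
  The matrix coefficient t L p r is the r-th coefficient of polA^p * polB^(L-p), where polA and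
  polB are linear polynomials whose Wronskian is N = det Z.  Two kinds of identities follow:
  a convolution formula for coefficients of products, and raising/lowering relations expressing
  a coordinate z_ij times t of degree M through t of degree M + 1 and N times t of degree M - 1.

  From these we prove a Clebsch-Gordan type decomposition: the product of coefficients of
  degrees L and L' is a combination of t M q s * N^j with M + 2 j = L + L' and j <= min L L'.
  Multiplying by the appropriate negative power of N gives all inclusions of product spans
  into Zh+, Zh-, Zh0.  For the reverse inclusions, t * N^j is a homogeneous polynomial, every
  homogeneous polynomial is a combination of products of two coefficients (monomials are
  products of extreme coefficients), and for Zh0 the convolution formula splits a coefficient
  directly.
\<close>

interpretation cfun: module "\<lambda>(c::complex) (f::'a \<Rightarrow> complex) x. c * f x"
  by unfold_locales (simp_all add: fun_eq_iff algebra_simps)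

lemma sum_fun_apply: "(\<Sum>a\<in>A. f a) x = (\<Sum>a\<in>A. f a x)"
  by (induction A rule: infinite_finite_induct) simp_all

lemma cspan_eq_span: "cspan S = cfun.span S"
  unfolding cspan_def cfun.span_explicit by (auto simp: sum_fun_apply fun_eq_iff)

lemma cspan_base: "g \<in> S \<Longrightarrow> g \<in> cspan S"
  unfolding cspan_eq_span by (rule cfun.span_base)

lemma cspan_zero: "(\<lambda>_. 0) \<in> cspan S"
  using cfun.span_zero[of S] unfolding cspan_eq_span zero_fun_def .

lemma cspan_add: "f \<in> cspan S \<Longrightarrow> g \<in> cspan S \<Longrightarrow> (\<lambda>x. f x + g x) \<in> cspan S"
  unfolding cspan_eq_span using cfun.span_add by (fastforce simp: plus_fun_def)

lemma cspan_diff: "f \<in> cspan S \<Longrightarrow> g \<in> cspan S \<Longrightarrow> (\<lambda>x. f x - g x) \<in> cspan S"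
  unfolding cspan_eq_span using cfun.span_diff by (fastforce simp: fun_diff_def)

lemma cspan_scale: "f \<in> cspan S \<Longrightarrow> (\<lambda>x. c * f x) \<in> cspan S"
  unfolding cspan_eq_span by (rule cfun.span_scale)

lemma cspan_cancel: "c \<noteq> 0 \<Longrightarrow> (\<lambda>x. c * f x) \<in> cspan S \<Longrightarrow> f \<in> cspan S"
  using cspan_scale[of "\<lambda>x. c * f x" S "inverse c"] by simp

lemma cspan_sum: "(\<And>i. i \<in> I \<Longrightarrow> f i \<in> cspan S) \<Longrightarrow> (\<lambda>x. \<Sum>i\<in>I. f i x) \<in> cspan S"
  unfolding cspan_eq_span using cfun.span_sum[of I f S] by (simp add: sum_fun_apply[abs_def])

lemma cspan_mono: "A \<subseteq> B \<Longrightarrow> cspan A \<subseteq> cspan B"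
  unfolding cspan_eq_span by (rule cfun.span_mono)

lemma cspan_subset: "A \<subseteq> cspan B \<Longrightarrow> cspan A \<subseteq> cspan B"
  unfolding cspan_eq_span by (intro cfun.span_minimal cfun.subspace_span)

lemma cspan_eqI: "A \<subseteq> cspan B \<Longrightarrow> B \<subseteq> cspan A \<Longrightarrow> cspan A = cspan B"
  by (simp add: cspan_subset subset_antisym)

lemma cspan_mult_left:
  assumes "f \<in> cspan S" "\<And>g. g \<in> S \<Longrightarrow> (\<lambda>x. h x * g x) \<in> cspan T"
  shows "(\<lambda>x. h x * f x) \<in> cspan T"
  using assms(1)[unfolded cspan_eq_span]
proof (induction rule: cfun.span_induct_alt)
  case base
  show ?case using cspan_zero by simp
next
  case (step c g f)
  have "(\<lambda>x. c * (h x * g x) + h x * f x) \<in> cspan T"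
    using assms(2)[OF step(1)] step(2) by (intro cspan_add cspan_scale)
  then show ?case by (simp add: algebra_simps)
qed

lemma cspan_mult:
  assumes "f \<in> cspan A" "g \<in> cspan B"
    and "\<And>a b. a \<in> A \<Longrightarrow> b \<in> B \<Longrightarrow> (\<lambda>x. a x * b x) \<in> cspan C"
  shows "(\<lambda>x. f x * g x) \<in> cspan C"
proof -
  have "(\<lambda>x. g x * a x) \<in> cspan C" if "a \<in> A" for a
    using cspan_mult_left[OF assms(2), of "\<lambda>x. a x"] assms(3)[OF that] by (simp add: mult.commute)
  from cspan_mult_left[OF assms(1) this] show ?thesis
    by (simp add: mult.commute)
qed

definition prods :: "('a \<Rightarrow> complex) set \<Rightarrow> ('a \<Rightarrow> complex) set \<Rightarrow> ('a \<Rightarrow> complex) set" where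
  "prods A B = {(\<lambda>x. f x * g x) | f g. f \<in> A \<and> g \<in> B}"

lemma prodspan_prods: "prodspan A B = cspan (prods A B)"
  unfolding prodspan_def prods_def ..

lemma prodspan_cspan: "prodspan (cspan A) (cspan B) = cspan (prods A B)"
  unfolding prodspan_prods
proof (rule cspan_eqI)
  show "prods (cspan A) (cspan B) \<subseteq> cspan (prods A B)"
    unfolding prods_def by (force intro: cspan_mult cspan_base)
  show "prods A B \<subseteq> cspan (prods (cspan A) (cspan B))"
    unfolding prods_def by (force intro: cspan_base)
qed

definition polA :: "cmat \<Rightarrow> complex poly" where
  "polA Z = [:Z$2$1, Z$1$1:]"

definition polB :: "cmat \<Rightarrow> complex poly" where
  "polB Z = [:Z$2$2, Z$1$2:]"

lemma t_eq: "t L p r Z = coeff (polA Z ^ p * polB Z ^ (L - p)) r"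
  by (simp add: t_def polA_def polB_def)

lemma N_eq: "N Z = Z$1$1 * Z$2$2 - Z$1$2 * Z$2$1"
  by (simp add: N_def det_2)

lemma degree_polAB: "degree (polA Z ^ a * polB Z ^ b) \<le> a + b"
proof -
  have "degree (polA Z) \<le> 1" "degree (polB Z) \<le> 1"
    by (simp_all add: polA_def polB_def)
  then have "degree (polA Z ^ a) \<le> a" "degree (polB Z ^ b) \<le> b"
    using degree_power_le[of "polA Z" a] degree_power_le[of "polB Z" b]
      mult_le_mono1[of _ 1 a] mult_le_mono1[of _ 1 b] by (simp_all add: order_trans)
  then show ?thesis
    using degree_mult_le[of "polA Z ^ a" "polB Z ^ b"] by linarith
qed

lemma t_vanish: "p \<le> L \<Longrightarrow> L < r \<Longrightarrow> t L p r Z = 0"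
  unfolding t_eq using degree_polAB[of Z p "L - p"] by (intro coeff_eq_0) simp

text \<open>Coefficients of a product of polynomials form a convolution: t of degree
  L + L' splits into products of t of degrees L and L'.\<close>
lemma t_split:
  assumes "p \<le> L" "p' \<le> L'"
  shows "t (L + L') (p + p') s Z = (\<Sum>i\<le>s. t L p i Z * t L' p' (s - i) Z)"
proof -
  have "L + L' - (p + p') = (L - p) + (L' - p')"
    using assms by simp
  then have "polA Z ^ (p + p') * polB Z ^ (L + L' - (p + p'))
      = (polA Z ^ p * polB Z ^ (L - p)) * (polA Z ^ p' * polB Z ^ (L' - p'))"
    by (simp only: power_add ac_simps)
  then show ?thesis
    unfolding t_eq by (simp only: coeff_mult)
qed

lemma pderiv_raise:
  fixes A B :: "'a::idom poly"
  shows "of_nat (p + q + 1) * pderiv A * (A ^ p * B ^ q)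
     = pderiv (A ^ Suc p * B ^ q) + of_nat q * (pderiv A * B - pderiv B * A) * (A ^ p * B ^ (q - 1))"
proof (cases q)
  case 0
  then show ?thesis
    by (simp add: pderiv_power_Suc of_nat_poly algebra_simps del: power_Suc)
next
  case (Suc q')
  have "pderiv (A ^ Suc p * B ^ q)
      = of_nat (Suc p) * pderiv A * (A ^ p * B ^ q) + of_nat q * pderiv B * (A ^ Suc p * B ^ q')"
    unfolding Suc pderiv_mult pderiv_power_Suc of_nat_mult_conv_smult[symmetric]
    by (simp only: power_Suc ac_simps)
  then show ?thesis
    unfolding Suc by (simp add: algebra_simps)
qed

lemma pderiv_polA: "pderiv (polA Z) = [:Z$1$1:]"
  and pderiv_polB: "pderiv (polB Z) = [:Z$1$2:]"
  by (simp_all add: polA_def polB_def pderiv_pCons)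

lemma wronskian_polAB: "pderiv (polA Z) * polB Z - pderiv (polB Z) * polA Z = [:N Z:]"
  unfolding pderiv_polA pderiv_polB by (simp add: polA_def polB_def N_eq algebra_simps)

lemma coeff_scaled: "coeff (of_nat n * [:c:] * P) s = of_nat n * c * coeff P s"
  by (simp add: of_nat_poly ac_simps)

lemma t_raise_z11:
  assumes "q \<le> M"
  shows "of_nat (M + 1) * Z$1$1 * t M q s Z
       = of_nat (s + 1) * t (M + 1) (q + 1) (s + 1) Z + of_nat (M - q) * N Z * t (M - 1) q s Z"
proof -
  have "of_nat (q + (M - q) + 1) * [:Z$1$1:] * (polA Z ^ q * polB Z ^ (M - q))
      = pderiv (polA Z ^ Suc q * polB Z ^ (M - q))
        + of_nat (M - q) * [:N Z:] * (polA Z ^ q * polB Z ^ (M - q - 1))"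
    using pderiv_raise[of q "M - q" "polA Z" "polB Z"]
    unfolding wronskian_polAB by (simp only: pderiv_polA)
  from arg_cong[where f="\<lambda>P. coeff P s", OF this] show ?thesis
    using assms unfolding coeff_add coeff_scaled coeff_pderiv by (simp add: t_eq)
qed

lemma t_raise_z12:
  assumes "q \<le> M"
  shows "of_nat (M + 1) * Z$1$2 * t M q s Z
       = of_nat (s + 1) * t (M + 1) q (s + 1) Z - of_nat q * N Z * t (M - 1) (q - 1) s Z"
proof -
  have "pderiv (polB Z) * polA Z - pderiv (polA Z) * polB Z = - [:N Z:]"
    using wronskian_polAB by (metis minus_diff_eq)
  then have "of_nat ((M - q) + q + 1) * [:Z$1$2:] * (polB Z ^ (M - q) * polA Z ^ q)
      = pderiv (polB Z ^ Suc (M - q) * polA Z ^ q)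
        - of_nat q * [:N Z:] * (polB Z ^ (M - q) * polA Z ^ (q - 1))"
    using pderiv_raise[of "M - q" q "polB Z" "polA Z"] by (simp add: pderiv_polB)
  from arg_cong[where f="\<lambda>P. coeff P s", OF this]
  have "of_nat ((M - q) + q + 1) * Z$1$2 * coeff (polB Z ^ (M - q) * polA Z ^ q) s
      = of_nat (Suc s) * coeff (polB Z ^ Suc (M - q) * polA Z ^ q) (Suc s)
        - of_nat q * N Z * coeff (polB Z ^ (M - q) * polA Z ^ (q - 1)) s"
    unfolding coeff_diff coeff_scaled coeff_pderiv .
  moreover have "coeff (polB Z ^ (M - q) * polA Z ^ q) s = t M q s Z"
    by (simp add: t_eq mult.commute)
  moreover have "coeff (polB Z ^ Suc (M - q) * polA Z ^ q) (Suc s) = t (M + 1) q (s + 1) Z"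
    using assms by (simp add: t_eq mult.commute Suc_diff_le del: power_Suc)
  moreover have "of_nat q * N Z * coeff (polB Z ^ (M - q) * polA Z ^ (q - 1)) s
      = of_nat q * N Z * t (M - 1) (q - 1) s Z"
    by (cases q) (simp_all add: t_eq mult.commute)
  ultimately show ?thesis
    using assms by simp
qed

lemma coeff_linear_mult:
  "coeff ([:a, b:] * P) s = a * coeff P s + (if s = 0 then 0 else b * coeff P (s - 1))"
  by (cases s) simp_all

lemma t_lower_z21:
  "t (M + 1) (p + 1) s Z = Z$2$1 * t M p s Z + (if s = 0 then 0 else Z$1$1 * t M p (s - 1) Z)"
proof -
  have "polA Z ^ (p + 1) * polB Z ^ (M + 1 - (p + 1)) = polA Z * (polA Z ^ p * polB Z ^ (M - p))"
    by simp
  then show ?thesis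
    unfolding t_eq by (simp only: polA_def coeff_linear_mult)
qed

lemma t_lower_z22:
  assumes "p \<le> M"
  shows "t (M + 1) p s Z = Z$2$2 * t M p s Z + (if s = 0 then 0 else Z$1$2 * t M p (s - 1) Z)"
proof -
  have "polA Z ^ p * polB Z ^ (M + 1 - p) = polB Z * (polA Z ^ p * polB Z ^ (M - p))"
    using assms by (simp add: Suc_diff_le algebra_simps)
  then show ?thesis
    unfolding t_eq by (simp only: polB_def coeff_linear_mult)
qed

definition coords :: "(cmat \<Rightarrow> complex) set" where
  "coords = {\<lambda>Z. Z$1$1, \<lambda>Z. Z$1$2, \<lambda>Z. Z$2$1, \<lambda>Z. Z$2$2}"

lemma t_succ_cases:
  assumes "p \<le> Suc M"
  obtains u v p' where "u \<in> coords" "v \<in> coords" "p' \<le> M"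
    "\<And>Z. t (Suc M) p r Z = u Z * t M p' r Z + (if r = 0 then 0 else v Z * t M p' (r - 1) Z)"
proof (cases p)
  case 0
  show thesis
    by (rule that[of "\<lambda>Z. Z$2$2" "\<lambda>Z. Z$1$2" 0])
      (use 0 t_lower_z22[of 0 M] in \<open>simp_all add: coords_def\<close>)
next
  case (Suc p')
  show thesis
    by (rule that[of "\<lambda>Z. Z$2$1" "\<lambda>Z. Z$1$1" p'])
      (use Suc assms t_lower_z21[of M p'] in \<open>simp_all add: coords_def\<close>)
qed

text \<open>Coefficients of degree zero, and the extreme coefficients, which are monomials; hence every
  monomial in the matrix entries is a product of two matrix coefficients.\<close>
lemma t_zero: "t 0 0 r Z = (if r = 0 then 1 else 0)"
  by (simp add: t_eq)

lemma t_top: "t (a + b) a (a + b) Z = Z$1$1 ^ a * Z$1$2 ^ b"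
proof (induction a)
  case 0
  show ?case
  proof (induction b)
    case (Suc b)
    then show ?case
      using t_lower_z22[of 0 b "Suc b" Z] t_vanish[of 0 b "Suc b" Z] by simp
  qed (simp add: t_zero)
next
  case (Suc a)
  then show ?case
    using t_lower_z21[of "a + b" a "Suc (a + b)" Z] t_vanish[of a "a + b" "Suc (a + b)" Z] by simp
qed

lemma t_bottom: "t (c + e) c 0 Z = Z$2$1 ^ c * Z$2$2 ^ e"
  by (simp add: t_eq coeff_mult coeff_0_power polA_def polB_def)

definition Tspan :: "nat \<Rightarrow> nat \<Rightarrow> (cmat \<Rightarrow> complex) set" where
  "Tspan D J = cspan {(\<lambda>Z. t M q s Z * N Z ^ j) | M q s j.
                     q \<le> M \<and> s \<le> M \<and> M + 2 * j = D \<and> j \<le> J}"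

text \<open>Membership of generators; coefficients with s > M vanish, so s needs no bound.\<close>
lemma Tspan_gen:
  assumes "q \<le> M" "M + 2 * j = D" "j \<le> J"
  shows "(\<lambda>Z. t M q s Z * N Z ^ j) \<in> Tspan D J"
proof (cases "s \<le> M")
  case True
  then show ?thesis
    unfolding Tspan_def using assms by (intro cspan_base) blast
next
  case False
  then have "(\<lambda>Z. t M q s Z * N Z ^ j) = (\<lambda>_. 0)"
    using assms t_vanish by fastforce
  then show ?thesis
    unfolding Tspan_def by (simp add: cspan_zero)
qed

lemma Tspan_mono: "J \<le> J' \<Longrightarrow> Tspan D J \<subseteq> Tspan D J'"
  unfolding Tspan_def by (rule cspan_mono) fastforce

lemma of_nat_Suc_nonzero: "(of_nat (M + 1) :: complex) \<noteq> 0"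
  by (simp only: of_nat_eq_0_iff)

lemma z11_Tspan:
  assumes "q \<le> M"
  shows "(\<lambda>Z. Z$1$1 * (t M q s Z * N Z ^ j)) \<in> Tspan (M + 2 * j + 1) (j + 1)"
proof -
  have "of_nat (M + 1) * (Z$1$1 * (t M q s Z * N Z ^ j))
      = of_nat (s + 1) * (t (M + 1) (q + 1) (s + 1) Z * N Z ^ j)
        + of_nat (M - q) * (t (M - 1) q s Z * N Z ^ (j + 1))" for Z
  proof -
    have "of_nat (M + 1) * (Z$1$1 * (t M q s Z * N Z ^ j)) = (of_nat (M + 1) * Z$1$1 * t M q s Z) * N Z ^ j"
      by (simp only: mult.assoc)
    then show ?thesis
      unfolding t_raise_z11[OF assms] by (simp add: algebra_simps)
  qed
  moreover have "(\<lambda>Z. t (M + 1) (q + 1) (s + 1) Z * N Z ^ j) \<in> Tspan (M + 2 * j + 1) (j + 1)"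
    using assms by (intro Tspan_gen) auto
  moreover have "(\<lambda>Z. of_nat (M - q) * (t (M - 1) q s Z * N Z ^ (j + 1))) \<in> Tspan (M + 2 * j + 1) (j + 1)"
  proof (cases "q < M")
    case True
    then show ?thesis
      unfolding Tspan_def by (intro cspan_scale Tspan_gen[unfolded Tspan_def]) auto
  qed (use assms cspan_zero in \<open>simp add: Tspan_def\<close>)
  ultimately have "(\<lambda>Z. of_nat (M + 1) * (Z$1$1 * (t M q s Z * N Z ^ j))) \<in> Tspan (M + 2 * j + 1) (j + 1)"
    unfolding Tspan_def by (auto intro: cspan_add cspan_scale)
  then show ?thesis
    unfolding Tspan_def by (rule cspan_cancel[OF of_nat_Suc_nonzero])
qed

lemma z12_Tspan:
  assumes "q \<le> M"
  shows "(\<lambda>Z. Z$1$2 * (t M q s Z * N Z ^ j)) \<in> Tspan (M + 2 * j + 1) (j + 1)"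
proof -
  have "of_nat (M + 1) * (Z$1$2 * (t M q s Z * N Z ^ j))
      = of_nat (s + 1) * (t (M + 1) q (s + 1) Z * N Z ^ j)
        - of_nat q * (t (M - 1) (q - 1) s Z * N Z ^ (j + 1))" for Z
  proof -
    have "of_nat (M + 1) * (Z$1$2 * (t M q s Z * N Z ^ j)) = (of_nat (M + 1) * Z$1$2 * t M q s Z) * N Z ^ j"
      by (simp only: mult.assoc)
    then show ?thesis
      unfolding t_raise_z12[OF assms] by (simp add: algebra_simps)
  qed
  moreover have "(\<lambda>Z. t (M + 1) q (s + 1) Z * N Z ^ j) \<in> Tspan (M + 2 * j + 1) (j + 1)"
    using assms by (intro Tspan_gen) auto
  moreover have "(\<lambda>Z. of_nat q * (t (M - 1) (q - 1) s Z * N Z ^ (j + 1))) \<in> Tspan (M + 2 * j + 1) (j + 1)"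
  proof (cases "0 < q")
    case True
    then show ?thesis
      using assms unfolding Tspan_def by (intro cspan_scale Tspan_gen[unfolded Tspan_def]) auto
  qed (use cspan_zero in \<open>simp add: Tspan_def\<close>)
  ultimately have "(\<lambda>Z. of_nat (M + 1) * (Z$1$2 * (t M q s Z * N Z ^ j))) \<in> Tspan (M + 2 * j + 1) (j + 1)"
    unfolding Tspan_def by (auto intro: cspan_diff cspan_scale)
  then show ?thesis
    unfolding Tspan_def by (rule cspan_cancel[OF of_nat_Suc_nonzero])
qed

text \<open>For z21 and z22 the lowering relations reduce to the cases of z11 and z12.\<close>
lemma z21_Tspan:
  assumes "q \<le> M"
  shows "(\<lambda>Z. Z$2$1 * (t M q s Z * N Z ^ j)) \<in> Tspan (M + 2 * j + 1) (j + 1)"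
proof -
  let ?c = "if s = 0 then 0 else 1 :: complex"
  have "(\<lambda>Z. Z$2$1 * (t M q s Z * N Z ^ j))
      = (\<lambda>Z. t (M + 1) (q + 1) s Z * N Z ^ j - ?c * (Z$1$1 * (t M q (s - 1) Z * N Z ^ j)))"
    using t_lower_z21 by (simp add: fun_eq_iff algebra_simps)
  moreover have "(\<lambda>Z. t (M + 1) (q + 1) s Z * N Z ^ j) \<in> Tspan (M + 2 * j + 1) (j + 1)"
    using assms by (intro Tspan_gen) auto
  ultimately show ?thesis
    using z11_Tspan[OF assms, of "s - 1" j] unfolding Tspan_def by (auto intro: cspan_diff cspan_scale)
qed

lemma z22_Tspan:
  assumes "q \<le> M"
  shows "(\<lambda>Z. Z$2$2 * (t M q s Z * N Z ^ j)) \<in> Tspan (M + 2 * j + 1) (j + 1)"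
proof -
  let ?c = "if s = 0 then 0 else 1 :: complex"
  have "(\<lambda>Z. Z$2$2 * (t M q s Z * N Z ^ j))
      = (\<lambda>Z. t (M + 1) q s Z * N Z ^ j - ?c * (Z$1$2 * (t M q (s - 1) Z * N Z ^ j)))"
    using t_lower_z22[OF assms] by (simp add: fun_eq_iff algebra_simps)
  moreover have "(\<lambda>Z. t (M + 1) q s Z * N Z ^ j) \<in> Tspan (M + 2 * j + 1) (j + 1)"
    using assms by (intro Tspan_gen) auto
  ultimately show ?thesis
    using z12_Tspan[OF assms, of "s - 1" j] unfolding Tspan_def by (auto intro: cspan_diff cspan_scale)
qed

lemma coords_Tspan:
  assumes "v \<in> coords" "f \<in> Tspan D J"
  shows "(\<lambda>Z. v Z * f Z) \<in> Tspan (Suc D) (Suc J)"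
proof -
  have "(\<lambda>Z. v Z * g Z) \<in> Tspan (Suc D) (Suc J)"
    if gen: "g \<in> {(\<lambda>Z. t M q s Z * N Z ^ j) | M q s j.
                       q \<le> M \<and> s \<le> M \<and> M + 2 * j = D \<and> j \<le> J}" for g
  proof -
    obtain M q s j where g: "g = (\<lambda>Z. t M q s Z * N Z ^ j)" "q \<le> M" "M + 2 * j = D" "j \<le> J"
      using gen by blast
    have "(\<lambda>Z. v Z * g Z) \<in> Tspan (M + 2 * j + 1) (j + 1)"
      using assms(1) z11_Tspan z12_Tspan z21_Tspan z22_Tspan g(1,2) by (auto simp: coords_def)
    then show ?thesis
      using Tspan_mono[of "j + 1" "Suc J" "Suc D"] g(3,4) by auto
  qed
  then show ?thesis
    using assms(2) unfolding Tspan_def by (rule cspan_mult_left[rotated])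
qed

lemma Tspan_product:
  "p \<le> L \<Longrightarrow> p' \<le> L' \<Longrightarrow> (\<lambda>Z. t L p r Z * t L' p' r' Z) \<in> Tspan (L + L') L'"
proof (induction L' arbitrary: p' r')
  case 0
  then have "(\<lambda>Z. t L p r Z * t 0 p' r' Z) = (\<lambda>Z. (if r' = 0 then 1 else 0) * (t L p r Z * N Z ^ 0))"
    by (simp add: t_zero)
  moreover have "(\<lambda>Z. t L p r Z * N Z ^ 0) \<in> Tspan (L + 0) 0"
    using 0 by (intro Tspan_gen) auto
  ultimately show ?case
    unfolding Tspan_def by (simp add: cspan_scale)
next
  case (Suc L')
  obtain u v p'' where uv: "u \<in> coords" "v \<in> coords" "p'' \<le> L'"
    and dec: "\<And>Z. t (Suc L') p' r' Z = u Z * t L' p'' r' Z + (if r' = 0 then 0 else v Z * t L' p'' (r' - 1) Z)"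
    using t_succ_cases[OF Suc.prems(2)] by blast
  let ?c = "if r' = 0 then 0 else 1 :: complex"
  have "(\<lambda>Z. t L p r Z * t (Suc L') p' r' Z)
      = (\<lambda>Z. u Z * (t L p r Z * t L' p'' r' Z) + ?c * (v Z * (t L p r Z * t L' p'' (r' - 1) Z)))"
    by (simp add: dec fun_eq_iff algebra_simps)
  moreover have "(\<lambda>Z. u Z * (t L p r Z * t L' p'' r' Z)) \<in> Tspan (Suc (L + L')) (Suc L')"
    using coords_Tspan[OF uv(1) Suc.IH[OF Suc.prems(1) uv(3)]] .
  moreover have "(\<lambda>Z. v Z * (t L p r Z * t L' p'' (r' - 1) Z)) \<in> Tspan (Suc (L + L')) (Suc L')"
    using coords_Tspan[OF uv(2) Suc.IH[OF Suc.prems(1) uv(3)]] .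
  ultimately show ?case
    unfolding Tspan_def by (auto intro: cspan_add cspan_scale)
qed

lemma Tspan_product_min:
  assumes "p \<le> L" "p' \<le> L'"
  shows "(\<lambda>Z. t L p r Z * t L' p' r' Z) \<in> Tspan (L + L') (min L L')"
proof (cases "L' \<le> L")
  case True
  then show ?thesis
    using Tspan_product[OF assms] by (simp add: min_absorb2)
next
  case False
  then show ?thesis
    using Tspan_product[OF assms(2,1), of r' r] by (simp add: add.commute mult.commute min_absorb1)
qed

definition zmonomial :: "nat \<Rightarrow> nat \<Rightarrow> nat \<Rightarrow> nat \<Rightarrow> cmat \<Rightarrow> complex" where
  "zmonomial a b c e Z = Z$1$1 ^ a * Z$1$2 ^ b * Z$2$1 ^ c * Z$2$2 ^ e"

definition Homog :: "nat \<Rightarrow> (cmat \<Rightarrow> complex) set" where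
  "Homog D = cspan {zmonomial a b c e | a b c e. a + b + c + e = D}"

lemma zmonomial_Homog: "a + b + c + e = D \<Longrightarrow> zmonomial a b c e \<in> Homog D"
  unfolding Homog_def by (intro cspan_base) blast

lemma Homog_mult:
  assumes "f \<in> Homog D" "g \<in> Homog D'"
  shows "(\<lambda>Z. f Z * g Z) \<in> Homog (D + D')"
proof -
  have monomial_product: "(\<lambda>Z. m Z * m' Z) \<in> Homog (D + D')"
    if mon: "m \<in> {zmonomial a b c e | a b c e. a + b + c + e = D}"
      "m' \<in> {zmonomial a b c e | a b c e. a + b + c + e = D'}" for m m'
  proof -
    obtain a b c e a' b' c' e' where m: "m = zmonomial a b c e" "m' = zmonomial a' b' c' e'"
      and deg: "a + b + c + e = D" "a' + b' + c' + e' = D'"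
      using mon by blast
    have "zmonomial (a + a') (b + b') (c + c') (e + e') \<in> Homog (D + D')"
      using deg by (intro zmonomial_Homog) simp
    then show ?thesis
      unfolding m by (simp add: zmonomial_def[abs_def] power_add ac_simps)
  qed
  show ?thesis
    unfolding Homog_def[of "D + D'"]
    by (rule cspan_mult[OF assms[unfolded Homog_def]]) (rule monomial_product[unfolded Homog_def])
qed

lemma coords_Homog: "v \<in> coords \<Longrightarrow> v \<in> Homog 1"
proof -
  assume "v \<in> coords"
  then have "v \<in> {zmonomial 1 0 0 0, zmonomial 0 1 0 0, zmonomial 0 0 1 0, zmonomial 0 0 0 1}"
    by (auto simp: coords_def zmonomial_def[abs_def])
  then show ?thesis
    by (auto intro!: zmonomial_Homog)
qed

lemma N_Homog: "N \<in> Homog 2"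
proof -
  have "N = (\<lambda>Z. zmonomial 1 0 0 1 Z - zmonomial 0 1 1 0 Z)"
    by (simp add: fun_eq_iff N_eq zmonomial_def)
  moreover have "zmonomial 1 0 0 1 \<in> Homog 2" "zmonomial 0 1 1 0 \<in> Homog 2"
    by (simp_all add: zmonomial_Homog)
  then have "(\<lambda>Z. zmonomial 1 0 0 1 Z - zmonomial 0 1 1 0 Z) \<in> Homog 2"
    unfolding Homog_def by (rule cspan_diff)
  ultimately show ?thesis
    by simp
qed

lemma t_Homog: "p \<le> M \<Longrightarrow> t M p r \<in> Homog M"
proof (induction M arbitrary: p r)
  case 0
  then have "t 0 p r = (\<lambda>Z. (if r = 0 then 1 else 0) * zmonomial 0 0 0 0 Z)"
    by (simp add: fun_eq_iff t_zero zmonomial_def)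
  then show ?case
    using zmonomial_Homog[of 0 0 0 0] unfolding Homog_def by (simp add: cspan_scale)
next
  case (Suc M)
  obtain u v p' where uv: "u \<in> coords" "v \<in> coords" "p' \<le> M"
    and dec: "\<And>Z. t (Suc M) p r Z = u Z * t M p' r Z + (if r = 0 then 0 else v Z * t M p' (r - 1) Z)"
    using t_succ_cases[OF Suc.prems] by blast
  let ?c = "if r = 0 then 0 else 1 :: complex"
  have "t (Suc M) p r = (\<lambda>Z. u Z * t M p' r Z + ?c * (v Z * t M p' (r - 1) Z))"
    by (simp add: dec fun_eq_iff)
  moreover have "(\<lambda>Z. u Z * t M p' r Z) \<in> Homog (Suc M)" "(\<lambda>Z. v Z * t M p' (r - 1) Z) \<in> Homog (Suc M)"
    using Homog_mult[OF coords_Homog Suc.IH[OF uv(3)]] uv by simp_all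
  ultimately show ?case
    unfolding Homog_def by (auto intro: cspan_add cspan_scale)
qed

lemma t_N_power_Homog: "p \<le> M \<Longrightarrow> (\<lambda>Z. t M p r Z * N Z ^ j) \<in> Homog (M + 2 * j)"
proof (induction j)
  case 0
  then show ?case
    using t_Homog[of p M r] by simp
next
  case (Suc j)
  from Homog_mult[OF Suc.IH[OF Suc.prems] N_Homog] show ?case
    by (simp add: ac_simps)
qed

definition Tprods :: "nat \<Rightarrow> (cmat \<Rightarrow> complex) set" where
  "Tprods D = {(\<lambda>Z. t a p r Z * t b p' r' Z) | a p r b p' r'.
                 p \<le> a \<and> r \<le> a \<and> p' \<le> b \<and> r' \<le> b \<and> a + b = D}"

text \<open>Every homogeneous polynomial is a combination of such products, since each monomial
  z11^a z12^b z21^c z22^e is the product of two extreme coefficients.\<close>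
lemma Homog_Tprods: "Homog D \<subseteq> cspan (Tprods D)"
  unfolding Homog_def
proof (rule cspan_subset, safe)
  fix a b c e assume "D = a + b + c + e"
  moreover have "zmonomial a b c e = (\<lambda>Z. t (a + b) a (a + b) Z * t (c + e) c 0 Z)"
    by (simp add: fun_eq_iff zmonomial_def t_top t_bottom ac_simps)
  ultimately show "zmonomial a b c e \<in> cspan (Tprods (a + b + c + e))"
    unfolding Tprods_def by (intro cspan_base CollectI exI[of _ "a + b"] exI[of _ a] exI[of _ "a + b"]
        exI[of _ "c + e"] exI[of _ c] exI[of _ 0]) simp
qed

definition tpow :: "nat \<Rightarrow> nat \<Rightarrow> nat \<Rightarrow> int \<Rightarrow> cmat \<Rightarrow> complex" where
  "tpow L p r k = (\<lambda>Z. t L p r Z * N Z powi k)"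

definition Zgens :: "(nat \<Rightarrow> int \<Rightarrow> bool) \<Rightarrow> (cmat \<Rightarrow> complex) set" where
  "Zgens P = {tpow L p r k | L p r k. p \<le> L \<and> r \<le> L \<and> P L k}"

definition Gplus :: "(cmat \<Rightarrow> complex) set" where
  "Gplus = {t L p r | L p r. p \<le> L \<and> r \<le> L}"

abbreviation Gminus :: "(cmat \<Rightarrow> complex) set" where
  "Gminus \<equiv> Zgens (\<lambda>L k. k = - (int L + 1))"

lemma Hplus_eq: "Hplus = cspan Gplus"
  unfolding Hplus_def Gplus_def ..

lemma Hminus_eq: "Hminus = cspan Gminus"
  unfolding Hminus_def Zgens_def tpow_def by (rule arg_cong[of _ _ cspan]) blast

lemma Zh_plus_eq: "Zh_plus = cspan (Zgens (\<lambda>L k. 0 \<le> k))"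
  unfolding Zh_plus_def Zgens_def tpow_def ..

lemma Zh_minus_eq: "Zh_minus = cspan (Zgens (\<lambda>L k. k \<le> - (int L + 2)))"
  unfolding Zh_minus_def Zgens_def tpow_def ..

lemma Zh_zero_eq: "Zh_zero = cspan (Zgens (\<lambda>L k. - (int L + 1) \<le> k \<and> k \<le> -1))"
  unfolding Zh_zero_def Zgens_def tpow_def ..

lemma tpow_Zgens: "p \<le> L \<Longrightarrow> r \<le> L \<Longrightarrow> P L k \<Longrightarrow> tpow L p r k \<in> Zgens P"
  unfolding Zgens_def by blast

text \<open>Combining powers of N; the side conditions avoid the convention 0 powi 0 = 1.\<close>
lemma powi_times_power:
  assumes "0 \<le> k \<or> int j + k < 0"
  shows "(x :: complex) powi k * x ^ j = x powi (int j + k)"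
proof (cases "int j + k = 0")
  case True
  with assms have "j = 0" "k = 0"
    by linarith+
  then show ?thesis
    by simp
next
  case False
  then show ?thesis
    by (simp add: power_int_add)
qed

lemma Tspan_shift:
  assumes "f \<in> Tspan D J" "0 \<le> k \<or> int J + k < 0"
    and "\<And>M j. M + 2 * j = D \<Longrightarrow> j \<le> J \<Longrightarrow> P M (int j + k)"
  shows "(\<lambda>Z. N Z powi k * f Z) \<in> cspan (Zgens P)"
proof -
  have "(\<lambda>Z. N Z powi k * g Z) \<in> cspan (Zgens P)"
    if gen: "g \<in> {(\<lambda>Z. t M q s Z * N Z ^ j) | M q s j.
                       q \<le> M \<and> s \<le> M \<and> M + 2 * j = D \<and> j \<le> J}" for g
  proof -
    obtain M q s j where g: "g = (\<lambda>Z. t M q s Z * N Z ^ j)" "q \<le> M" "s \<le> M" "M + 2 * j = D" "j \<le> J"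
      using gen by blast
    have "0 \<le> k \<or> int j + k < 0"
      using assms(2) g(5) by auto
    then have "(\<lambda>Z. N Z powi k * g Z) = tpow M q s (int j + k)"
      unfolding g(1) mult.left_commute[of "N _ powi k"] tpow_def by (simp only: powi_times_power)
    then show ?thesis
      using g assms(3) by (auto intro: cspan_base tpow_Zgens)
  qed
  then show ?thesis
    using assms(1) unfolding Tspan_def by (rule cspan_mult_left[rotated])
qed

lemma powi_add_negative:
  assumes "a < 0" "b < 0"
  shows "(x :: complex) powi a * x powi b = x powi (a + b)"
  using assms by (simp add: power_int_add)

text \<open>Part (1): products of H+ generators lie in Zh+, and conversely every generator
  t * N^k with k >= 0 is homogeneous, hence a combination of products of two coefficients.\<close>
lemma prods_plus_plus: "prods Gplus Gplus \<subseteq> cspan (Zgens (\<lambda>L k. 0 \<le> k))"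
proof
  fix F assume "F \<in> prods Gplus Gplus"
  then obtain L p r L' p' r' where F: "F = (\<lambda>Z. t L p r Z * t L' p' r' Z)" "p \<le> L" "p' \<le> L'"
    unfolding prods_def Gplus_def by blast
  have "(\<lambda>Z. N Z powi 0 * F Z) \<in> cspan (Zgens (\<lambda>L k. 0 \<le> k))"
    using F(1) Tspan_product[OF F(2,3)] by (intro Tspan_shift) auto
  then show "F \<in> cspan (Zgens (\<lambda>L k. 0 \<le> k))"
    by simp
qed

lemma Zgens_plus: "Zgens (\<lambda>L k. 0 \<le> k) \<subseteq> cspan (prods Gplus Gplus)"
proof
  fix G assume "G \<in> Zgens (\<lambda>L k. 0 \<le> k)"
  then obtain L p r n where G: "G = tpow L p r (int n)" "p \<le> L"
    unfolding Zgens_def by (auto elim: nonneg_int_cases)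
  have "G = (\<lambda>Z. t L p r Z * N Z ^ n)"
    unfolding G(1) tpow_def by simp
  also have "\<dots> \<in> cspan (Tprods (L + 2 * n))"
    using Homog_Tprods t_N_power_Homog[OF G(2)] by blast
  also have "\<dots> \<subseteq> cspan (prods Gplus Gplus)"
    unfolding Tprods_def prods_def Gplus_def by (rule cspan_mono) blast
  finally show "G \<in> cspan (prods Gplus Gplus)" .
qed

text \<open>Part (2): products of H- generators carry N^-(L+L'+2) and land in Zh-; conversely a
  generator of Zh- is N^-(D+2) times a homogeneous polynomial of degree D, which is a combination of
  products t_a t_b with a + b = D, i.e. of products of H- generators.\<close>
lemma prods_minus_minus: "prods Gminus Gminus \<subseteq> cspan (Zgens (\<lambda>L k. k \<le> - (int L + 2)))"
proof
  fix F assume "F \<in> prods Gminus Gminus"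
  then obtain L p r L' p' r' where F: "F = (\<lambda>Z. tpow L p r (- (int L + 1)) Z * tpow L' p' r' (- (int L' + 1)) Z)"
      "p \<le> L" "p' \<le> L'"
    unfolding prods_def Zgens_def by blast
  have "N Z powi (- (int L + 1)) * N Z powi (- (int L' + 1)) = N Z powi (- (int (L + L') + 2))" for Z
    by (subst powi_add_negative) simp_all
  then have "F = (\<lambda>Z. N Z powi (- (int (L + L') + 2)) * (t L p r Z * t L' p' r' Z))"
    unfolding F(1) tpow_def by (simp only: ac_simps)
  also have "\<dots> \<in> cspan (Zgens (\<lambda>L k. k \<le> - (int L + 2)))"
    using Tspan_product[OF F(2,3)] by (rule Tspan_shift) auto
  finally show "F \<in> cspan (Zgens (\<lambda>L k. k \<le> - (int L + 2)))" .
qed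

lemma Tprods_Gminus:
  assumes "h \<in> Tprods D"
  shows "(\<lambda>Z. N Z powi (- (int D + 2)) * h Z) \<in> prods Gminus Gminus"
proof -
  obtain a p r b p' r' where h: "h = (\<lambda>Z. t a p r Z * t b p' r' Z)"
      "p \<le> a" "r \<le> a" "p' \<le> b" "r' \<le> b" "a + b = D"
    using assms unfolding Tprods_def by blast
  have "N Z powi (- (int a + 1)) * N Z powi (- (int b + 1)) = N Z powi (- (int D + 2))" for Z
    using h(6) by (subst powi_add_negative) auto
  then have "(\<lambda>Z. N Z powi (- (int D + 2)) * h Z)
      = (\<lambda>Z. tpow a p r (- (int a + 1)) Z * tpow b p' r' (- (int b + 1)) Z)"
    unfolding h(1) tpow_def by (simp only: ac_simps)
  moreover have "tpow a p r (- (int a + 1)) \<in> Gminus" "tpow b p' r' (- (int b + 1)) \<in> Gminus"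
    using h(2-5) by (simp_all add: tpow_Zgens)
  ultimately show ?thesis
    unfolding prods_def by blast
qed

lemma Zgens_minus: "Zgens (\<lambda>L k. k \<le> - (int L + 2)) \<subseteq> cspan (prods Gminus Gminus)"
proof
  fix G assume "G \<in> Zgens (\<lambda>L k. k \<le> - (int L + 2))"
  then obtain M q s k where G: "G = tpow M q s k" "q \<le> M" "k \<le> - (int M + 2)"
    unfolding Zgens_def by blast
  define j where "j = nat (- (int M + 2) - k)"
  define D where "D = M + 2 * j"
  have exponent: "int j + - (int D + 2) < 0" "k = int j + - (int D + 2)"
    using G(3) unfolding j_def D_def by simp_all
  have "G = (\<lambda>Z. N Z powi (- (int D + 2)) * (t M q s Z * N Z ^ j))"
    unfolding G(1) exponent(2) tpow_def mult.left_commute[of "N _ powi _"]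
    by (simp only: powi_times_power[OF disjI2[OF exponent(1)]])
  also have "\<dots> \<in> cspan (prods Gminus Gminus)"
  proof (rule cspan_mult_left[OF _ cspan_base[OF Tprods_Gminus]])
    show "(\<lambda>Z. t M q s Z * N Z ^ j) \<in> cspan (Tprods D)"
      using Homog_Tprods t_N_power_Homog[OF G(2)] unfolding D_def by blast
  qed
  finally show "G \<in> cspan (prods Gminus Gminus)" .
qed

text \<open>Part (3): mixed products land in Zh0 because the determinant power in the
  Clebsch-Gordan decomposition is at most min L L'; conversely t M q s * N^-(L+1) splits by the
  convolution formula into products of t of degree L times N^-(L+1) with t of degree M - L.\<close>
lemma prods_minus_plus: "prods Gminus Gplus \<subseteq> cspan (Zgens (\<lambda>L k. - (int L + 1) \<le> k \<and> k \<le> -1))"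
proof
  fix F assume "F \<in> prods Gminus Gplus"
  then obtain L p r L' p' r' where F: "F = (\<lambda>Z. tpow L p r (- (int L + 1)) Z * t L' p' r' Z)"
      "p \<le> L" "p' \<le> L'"
    unfolding prods_def Zgens_def Gplus_def by blast
  have "F = (\<lambda>Z. N Z powi (- (int L + 1)) * (t L p r Z * t L' p' r' Z))"
    unfolding F(1) tpow_def by (simp only: ac_simps)
  also have "\<dots> \<in> cspan (Zgens (\<lambda>L k. - (int L + 1) \<le> k \<and> k \<le> -1))"
    using Tspan_product_min[OF F(2,3)] by (rule Tspan_shift) auto
  finally show "F \<in> cspan (Zgens (\<lambda>L k. - (int L + 1) \<le> k \<and> k \<le> -1))" .
qed

lemma Zgens_zero: "Zgens (\<lambda>L k. - (int L + 1) \<le> k \<and> k \<le> -1) \<subseteq> cspan (prods Gminus Gplus)"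
proof
  fix G assume "G \<in> Zgens (\<lambda>L k. - (int L + 1) \<le> k \<and> k \<le> -1)"
  then obtain M q s k where G: "G = tpow M q s k" "q \<le> M" "- (int M + 1) \<le> k" "k \<le> -1"
    unfolding Zgens_def by blast
  define L where "L = nat (- k - 1)"
  define p1 where "p1 = min q L"
  have L: "L \<le> M" "k = - (int L + 1)"
    using G(3,4) unfolding L_def by simp_all
  have p: "p1 \<le> L" "q - p1 \<le> M - L" "p1 + (q - p1) = q" "L + (M - L) = M"
    using G(2) L(1) unfolding p1_def by auto
  have "G = (\<lambda>Z. \<Sum>i\<le>s. tpow L p1 i (- (int L + 1)) Z * t (M - L) (q - p1) (s - i) Z)"
    using t_split[OF p(1,2), of s] unfolding G(1) tpow_def L(2) p(3,4)
    by (simp add: fun_eq_iff sum_distrib_left ac_simps)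
  also have "\<dots> \<in> cspan (prods Gminus Gplus)"
  proof (rule cspan_sum)
    fix i assume "i \<in> {..s}"
    show "(\<lambda>Z. tpow L p1 i (- (int L + 1)) Z * t (M - L) (q - p1) (s - i) Z) \<in> cspan (prods Gminus Gplus)"
    proof (cases "i \<le> L \<and> s - i \<le> M - L")
      case True
      then have "tpow L p1 i (- (int L + 1)) \<in> Gminus" "t (M - L) (q - p1) (s - i) \<in> Gplus"
        using p unfolding Gplus_def by (auto intro: tpow_Zgens)
      then show ?thesis
        unfolding prods_def by (intro cspan_base) blast
    next
      case False
      then have "(\<lambda>Z. tpow L p1 i (- (int L + 1)) Z * t (M - L) (q - p1) (s - i) Z) = (\<lambda>_. 0)"
        using t_vanish p(1,2) by (auto simp: fun_eq_iff tpow_def)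
      then show ?thesis
        by (simp add: cspan_zero)
    qed
  qed
  finally show "G \<in> cspan (prods Gminus Gplus)" .
qed

theorem mainTheorem3:
  shows "prodspan Hplus Hplus = Zh_plus
       \<and> prodspan Hminus Hminus = Zh_minus
       \<and> prodspan Hminus Hplus = Zh_zero"
proof (intro conjI)
  show "prodspan Hplus Hplus = Zh_plus"
    unfolding Hplus_eq Zh_plus_eq prodspan_cspan by (rule cspan_eqI[OF prods_plus_plus Zgens_plus])
  show "prodspan Hminus Hminus = Zh_minus"
    unfolding Hminus_eq Zh_minus_eq prodspan_cspan by (rule cspan_eqI[OF prods_minus_minus Zgens_minus])
  show "prodspan Hminus Hplus = Zh_zero"
    unfolding Hminus_eq Hplus_eq Zh_zero_eq prodspan_cspan by (rule cspan_eqI[OF prods_minus_plus Zgens_zero])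
qed

end
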